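(* Consider optimal control problem OCP-1 (described in the context), let $u_*^1$ be an optimal control with optimal trajectory $(s_*^1,e_*^1,i_*^1,j_*^1)$ and let $\psi_*=(\psi_1^*,\dots,\psi_4^* )$ be the corresponding adjoint function from the Pontryagin maximum principle. Suppose that at some moment $t_0\in[0,T)$ the inequality $A_*(t_0)<0$ holds. Then $\lambda_*^1(t_0)>0.5u_{\max}$.
   Context: Parameters: $\beta_1,\beta_2,\gamma,\rho_1,\rho_2>0$; $\sigma_1,\sigma_2>0$ with $\sigma_1+\sigma_2=1$; $0\le u_{\max}<1$; weights $\alpha_1,\alpha_2\ge0$, $\alpha_3>0$; horizon $T>0$; initial values $s_0,e_0,i_0,j_0>0$ with $s_0+e_0+i_0+j_0\le 1$. The admissible controls are all Lebesgue measurable $u:[0,T]\to[0,u_{\max}]$. The state system is $s'=-s(\beta_1(1-u)^2i+\beta_2(1-u)j)$, $e'=s(\beta_1(1-u)^2i+\beta_2(1-u)j)-\gamma e$, $i'=\sigma_1\gamma e-\rho_1 i$, $j'=\sigma_2\gamma e-\rho_2 j$, with $s(0)=s_0,e(0)=e_0,i(0)=i_0,j(0)=j_0$. OCP-1 is the problem of minimizing $Q(u)=\alpha_1(e(T)+i(T)+j(T))+\alpha_2\int_0^T(e+i+j)\,dt+0.5\alpha_3\int_0^Tu^2\,dt$ over admissible controls. Its Hamiltonian is $H(s,e,i,j,\psi_1,\dots,\psi_4,u)=-s(\beta_1(1-u)^2i+\beta_2(1-u)j)(\psi_1-\psi_2)-\gamma e(\psi_2-\sigma_1\psi_3-\sigma_2\psi_4)-\rho_1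 i\psi_3-\rho_2 j\psi_4-\alpha_2(e+i+j)-0.5\alpha_3u^2$. The adjoint function $\psi_*$ is a nontrivial solution of $\psi_1'=(\beta_1(1-u_*^1)^2i_*^1+\beta_2(1-u_*^1)j_*^1)(\psi_1-\psi_2)$, $\psi_2'=\gamma(\psi_2-\sigma_1\psi_3-\sigma_2\psi_4)+\alpha_2$, $\psi_3'=\beta_1(1-u_*^1)^2s_*^1(\psi_1-\psi_2)+\rho_1\psi_3+\alpha_2$, $\psi_4'=\beta_2(1-u_*^1)s_*^1(\psi_1-\psi_2)+\rho_2\psi_4+\alpha_2$, with $\psi_1(T)=0$, $\psi_2(T)=\psi_3(T)=\psi_4(T)=-\alpha_1$, and $u_*^1(t)$ maximizes $H(s_*^1(t),e_*^1(t),i_*^1(t),j_*^1(t),\psi_*(t),u)$ over $u\in[0,u_{\max}]$ for almost all $t$. Define $A_*(t)=\beta_1s_*^1(t)i_*^1(t)(\psi_1^*(t)-\psi_2^*(t))+0.5\alpha_3$, $B_*(t)=s_*^1(t)(2\beta_1i_*^1(t)+\beta_2j_*^1(t))(\psi_1^*(t)-\psi_2^*(t))$, and, whenever $A_*(t)\neq0$, the indicator function $\lambda_*^1(t)=0.5B_*(t)/A_*(t)$. *)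

theory Defs
  imports "HOL-Analysis.Analysis"
begin

definition foi :: "real \<Rightarrow> real \<Rightarrow> real \<Rightarrow> real \<Rightarrow> real \<Rightarrow> real \<Rightarrow> real" where
  "foi b1 b2 u s i j = s * (b1 * (1 - u)^2 * i + b2 * (1 - u) * j)"

definition admissible :: "real \<Rightarrow> real \<Rightarrow> (real \<Rightarrow> real) \<Rightarrow> bool" where
  "admissible umax T u \<longleftrightarrow>
     u \<in> borel_measurable (lebesgue_on {0..T}) \<and> (\<forall>t\<in>{0..T}. 0 \<le> u t \<and> u t \<le> umax)"

text \<open>(s,e,i,j) is a (Caratheodory, i.e. absolutely continuous) solution of the state system
  on [0,T] for control u, written in integral form.\<close>
definition is_trajectory ::
  "real \<Rightarrow> real \<Rightarrow> real \<Rightarrow> real \<Rightarrow> real \<Rightarrow> real \<Rightarrow> real \<Rightarrow> real \<Rightarrow>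
   real \<Rightarrow> real \<Rightarrow> real \<Rightarrow> real \<Rightarrow> (real \<Rightarrow> real) \<Rightarrow>
   (real \<Rightarrow> real) \<Rightarrow> (real \<Rightarrow> real) \<Rightarrow> (real \<Rightarrow> real) \<Rightarrow> (real \<Rightarrow> real) \<Rightarrow> bool" where
  "is_trajectory b1 b2 g r1 r2 sg1 sg2 T s0 e0 i0 j0 u s e i j \<longleftrightarrow>
     (\<forall>t\<in>{0..T}.
        ((\<lambda>\<tau>. - foi b1 b2 (u \<tau>) (s \<tau>) (i \<tau>) (j \<tau>)) has_integral (s t - s0)) {0..t} \<and>
        ((\<lambda>\<tau>. foi b1 b2 (u \<tau>) (s \<tau>) (i \<tau>) (j \<tau>) - g * e \<tau>) has_integral (e t - e0)) {0..t} \<and>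
        ((\<lambda>\<tau>. sg1 * g * e \<tau> - r1 * i \<tau>) has_integral (i t - i0)) {0..t} \<and>
        ((\<lambda>\<tau>. sg2 * g * e \<tau> - r2 * j \<tau>) has_integral (j t - j0)) {0..t})"

definition cost ::
  "real \<Rightarrow> real \<Rightarrow> real \<Rightarrow> real \<Rightarrow> (real \<Rightarrow> real) \<Rightarrow>
   (real \<Rightarrow> real) \<Rightarrow> (real \<Rightarrow> real) \<Rightarrow> (real \<Rightarrow> real) \<Rightarrow> real" where
  "cost a1 a2 a3 T u e i j =
     a1 * (e T + i T + j T) + a2 * integral {0..T} (\<lambda>t. e t + i t + j t)
     + 0.5 * a3 * integral {0..T} (\<lambda>t. (u t)^2)"

definition hamiltonian ::
  "real \<Rightarrow> real \<Rightarrow> real \<Rightarrow> real \<Rightarrow> real \<Rightarrow> real \<Rightarrow> real \<Rightarrow> real \<Rightarrow> real \<Rightarrow>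
   real \<Rightarrow> real \<Rightarrow> real \<Rightarrow> real \<Rightarrow> real \<Rightarrow> real \<Rightarrow> real \<Rightarrow> real \<Rightarrow> real \<Rightarrow> real" where
  "hamiltonian b1 b2 g r1 r2 sg1 sg2 a2 a3 s e i j p1 p2 p3 p4 u =
     - foi b1 b2 u s i j * (p1 - p2) - g * e * (p2 - sg1 * p3 - sg2 * p4)
     - r1 * i * p3 - r2 * j * p4 - a2 * (e + i + j) - 0.5 * a3 * u^2"

definition is_adjoint ::
  "real \<Rightarrow> real \<Rightarrow> real \<Rightarrow> real \<Rightarrow> real \<Rightarrow> real \<Rightarrow> real \<Rightarrow> real \<Rightarrow> real \<Rightarrow> real \<Rightarrow>
   (real \<Rightarrow> real) \<Rightarrow> (real \<Rightarrow> real) \<Rightarrow> (real \<Rightarrow> real) \<Rightarrow> (real \<Rightarrow> real) \<Rightarrow>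
   (real \<Rightarrow> real) \<Rightarrow> (real \<Rightarrow> real) \<Rightarrow> (real \<Rightarrow> real) \<Rightarrow> (real \<Rightarrow> real) \<Rightarrow> bool" where
  "is_adjoint b1 b2 g r1 r2 sg1 sg2 a1 a2 T u s i j p1 p2 p3 p4 \<longleftrightarrow>
     p1 T = 0 \<and> p2 T = - a1 \<and> p3 T = - a1 \<and> p4 T = - a1 \<and>
     (\<forall>t\<in>{0..T}.
        ((\<lambda>\<tau>. (b1 * (1 - u \<tau>)^2 * i \<tau> + b2 * (1 - u \<tau>) * j \<tau>) * (p1 \<tau> - p2 \<tau>))
            has_integral (p1 T - p1 t)) {t..T} \<and>
        ((\<lambda>\<tau>. g * (p2 \<tau> - sg1 * p3 \<tau> - sg2 * p4 \<tau>) + a2)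
            has_integral (p2 T - p2 t)) {t..T} \<and>
        ((\<lambda>\<tau>. b1 * (1 - u \<tau>)^2 * s \<tau> * (p1 \<tau> - p2 \<tau>) + r1 * p3 \<tau> + a2)
            has_integral (p3 T - p3 t)) {t..T} \<and>
        ((\<lambda>\<tau>. b2 * (1 - u \<tau>) * s \<tau> * (p1 \<tau> - p2 \<tau>) + r2 * p4 \<tau> + a2)
            has_integral (p4 T - p4 t)) {t..T})"

definition A_fun :: "real \<Rightarrow> real \<Rightarrow> real \<Rightarrow> real \<Rightarrow> real \<Rightarrow> real \<Rightarrow> real" where
  "A_fun b1 a3 s i p1 p2 = b1 * s * i * (p1 - p2) + 0.5 * a3"

definition B_fun :: "real \<Rightarrow> real \<Rightarrow> real \<Rightarrow> real \<Rightarrow> real \<Rightarrow> real \<Rightarrow> real \<Rightarrow> real" where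
  "B_fun b1 b2 s i j p1 p2 = s * (2 * b1 * i + b2 * j) * (p1 - p2)"

text \<open>Indicator function lambda = 0.5 B / A (meaningful when A \<noteq> 0).\<close>
definition lambda_fun :: "real \<Rightarrow> real \<Rightarrow> real \<Rightarrow> real \<Rightarrow> real \<Rightarrow> real \<Rightarrow> real \<Rightarrow> real \<Rightarrow> real" where
  "lambda_fun b1 b2 a3 s i j p1 p2 = 0.5 * B_fun b1 b2 s i j p1 p2 / A_fun b1 a3 s i p1 p2"

end

theory Submission imports Defs begin

text \<open>Since \<open>A < 0\<close> and \<open>\<alpha>\<^sub>3 > 0\<close>, the product \<open>s i (\<psi>\<^sub>1 - \<psi>\<^sub>2)\<close> is negative at \<open>t\<^sub>0\<close>;
  as the trajectory is positive, this forces \<open>s (\<psi>\<^sub>1 - \<psi>\<^sub>2) < 0\<close>, hence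
  \<open>B = 2A - \<alpha>\<^sub>3 + \<beta>\<^sub>2 s j (\<psi>\<^sub>1 - \<psi>\<^sub>2) < A \<le> u\<^sub>m\<^sub>a\<^sub>x A\<close>, and dividing by \<open>A < 0\<close> gives the claim.

  Positivity of the trajectory is the only analytic input. At the first time \<open>b\<close> at which some
  component \<open>F\<close> vanishes, all components are still nonnegative on \<open>[0, b]\<close>, so \<open>F' \<ge> -K F\<close> there.
  Integrating backwards from \<open>F b = 0\<close> gives \<open>F t \<le> K \<integral>\<^sub>t\<^sup>b F\<close>, and on an interval of length
  at most \<open>1/(2K)\<close> this bounds the maximum of \<open>F\<close> by half of itself, so \<open>F\<close> cannot be positive
  just before \<open>b\<close>.\<close>

lemma integral_form_initial_value:
  fixes f F :: "real \<Rightarrow> real"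
  assumes "\<forall>t\<in>{a..T}. (f has_integral (F t - c)) {a..t}" and "a \<le> T"
  shows "F a = c"
  using assms by (metis atLeastAtMost_iff atLeastAtMost_singleton eq_iff_diff_eq_0
      has_integral_refl(2) has_integral_unique order_refl)

lemma integral_form_eq:
  fixes f F :: "real \<Rightarrow> real"
  assumes "\<forall>t\<in>{a..T}. (f has_integral (F t - c)) {a..t}" and "t \<in> {a..T}"
  shows "F t = c + integral {a..t} f"
  using assms by (metis add.commute diff_add_cancel integral_unique)

lemma integral_form_continuous_on:
  fixes f F :: "real \<Rightarrow> real"
  assumes "\<forall>t\<in>{a..T}. (f has_integral (F t - c)) {a..t}" and "a \<le> T"
  shows "continuous_on {a..T} F"
proof -
  have "f integrable_on {a..T}" using assms by auto
  then have "continuous_on {a..T} (\<lambda>t. c + integral {a..t} f)"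
    by (intro continuous_on_add continuous_on_const indefinite_integral_continuous_1)
  then show ?thesis
    by (rule continuous_on_eq) (use integral_form_eq[OF assms(1)] in auto)
qed

lemma integral_form_has_integral:
  fixes f F :: "real \<Rightarrow> real"
  assumes F: "\<forall>t\<in>{a..T}. (f has_integral (F t - c)) {a..t}" and "a \<le> t" "t \<le> b" "b \<le> T"
  shows "(f has_integral (F b - F t)) {t..b}"
proof -
  have fb: "f integrable_on {a..b}" using F assms by auto
  then have "f integrable_on {t..b}"
    using assms by (auto intro: integrable_on_subinterval)
  moreover have "integral {a..t} f + integral {t..b} f = integral {a..b} f"
    using assms fb by (intro Henstock_Kurzweil_Integration.integral_combine) auto
  ultimately have "integral {t..b} f = F b - F t"
    using integral_form_eq[OF F] assms by auto
  with \<open>f integrable_on {t..b}\<close> show ?thesis by (metis has_integral_integral)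
qed

lemma backward_integral_bound_imp_nonpos:
  fixes f :: "real \<Rightarrow> real"
  assumes "a < b" and cont: "continuous_on {a..b} f" and "K \<ge> 0"
    and bound: "\<forall>t\<in>{a..b}. f t \<le> K * integral {t..b} f"
  shows "\<exists>t\<in>{a..<b}. f t \<le> 0"
proof (rule ccontr)
  assume pos: "\<not> ?thesis"
  define t1 where "t1 = max a (b - 1 / (2 * K + 2))"
  have t1: "a \<le> t1" "t1 < b" using assms by (auto simp: t1_def)
  have "K * (b - t1) \<le> K * (1 / (2 * K + 2))"
    using \<open>K \<ge> 0\<close> by (intro mult_left_mono) (auto simp: t1_def)
  also have "\<dots> \<le> 1 / 2" using \<open>K \<ge> 0\<close> by (simp add: field_simps)
  finally have short: "K * (b - t1) \<le> 1 / 2" .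
  have cont1: "continuous_on {t1..b} f" using t1 by (auto intro: continuous_on_subset[OF cont])
  obtain c where c: "c \<in> {t1..b}" and max: "\<forall>x\<in>{t1..b}. f x \<le> f c"
    using continuous_attains_sup[OF compact_Icc _ cont1] t1 by auto
  have "f t1 > 0" using pos t1 by (meson atLeastLessThan_iff not_le)
  then have fc: "f c > 0" using max t1 by force
  have "integral {c..b} f \<le> integral {c..b} (\<lambda>_. f c)"
    using c max by (intro integral_le integrable_continuous_interval continuous_on_subset[OF cont1]) auto
  also have "\<dots> = (b - c) * f c" using c by simp
  finally have "f c \<le> K * ((b - c) * f c)"
    using bound c t1 \<open>K \<ge> 0\<close> by (meson atLeastAtMost_iff order.trans mult_left_mono)
  also have "\<dots> \<le> K * (b - t1) * f c"
    using c fc \<open>K \<ge> 0\<close> by (simp add: mult.assoc mult_left_mono mult_right_mono)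
  also have "\<dots> \<le> 1 / 2 * f c" using short fc by (intro mult_right_mono) auto
  finally show False using fc by simp
qed

lemma integral_form_positive_before_imp_nonzero:
  fixes F h :: "real \<Rightarrow> real"
  assumes F: "\<forall>t\<in>{a..T}. (h has_integral (F t - c)) {a..t}" and "a < b" "b \<le> T" "K \<ge> 0"
    and lower: "\<forall>x\<in>{a..b}. - K * F x \<le> h x"
    and pos: "\<forall>x\<in>{a..<b}. F x > 0"
  shows "F b \<noteq> 0"
proof
  assume Fb: "F b = 0"
  have cont: "continuous_on {a..b} F"
    using assms by (intro continuous_on_subset[OF integral_form_continuous_on[OF F]]) auto
  have "F t \<le> K * integral {t..b} F" if t: "t \<in> {a..b}" for t
  proof -
    have "((\<lambda>x. - K * F x) has_integral (- K * integral {t..b} F)) {t..b}"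
      using t by (intro has_integral_mult_right integrable_integral integrable_continuous_interval
          continuous_on_subset[OF cont]) auto
    moreover have "(h has_integral (F b - F t)) {t..b}"
      using t assms by (intro integral_form_has_integral[OF F]) auto
    ultimately have "- K * integral {t..b} F \<le> F b - F t"
      by (rule has_integral_le) (use lower t in auto)
    then show ?thesis using Fb by simp
  qed
  then show False
    using backward_integral_bound_imp_nonpos[OF \<open>a < b\<close> cont \<open>K \<ge> 0\<close>] pos by fastforce
qed

lemma first_zero_point:
  fixes m :: "real \<Rightarrow> real"
  assumes cont: "continuous_on {a..T} m" and "m a > 0" and "\<exists>t\<in>{a..T}. m t \<le> 0"
  obtains b where "a < b" "b \<le> T" "m b = 0" "\<forall>x\<in>{a..<b}. m x > 0"
proof -
  define Z where "Z = {a..T} \<inter> m -` {..0}"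
  have "closed Z" unfolding Z_def
    by (intro continuous_closed_preimage cont) auto
  moreover have "Z \<noteq> {}" "bdd_below Z" using assms(3) by (auto simp: Z_def)
  ultimately have bZ: "Inf Z \<in> Z" by (rule closed_contains_Inf[rotated 2])
  have below: "m x > 0" if "x \<in> {a..<Inf Z}" for x
    using that bZ cInf_lower[OF _ \<open>bdd_below Z\<close>, of x] by (force simp: Z_def)
  have "a \<noteq> Inf Z" using bZ \<open>m a > 0\<close> by (auto simp: Z_def)
  then have "a < Inf Z" using bZ by (auto simp: Z_def)
  have "continuous_on {a..Inf Z} m"
    using bZ by (auto simp: Z_def intro: continuous_on_subset[OF cont])
  then obtain z where z: "a \<le> z" "z \<le> Inf Z" "m z = 0"
    using IVT2'[of m "Inf Z" 0 a] bZ \<open>m a > 0\<close> by (auto simp: Z_def)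
  then have "z = Inf Z" using below[of z] by force
  then show ?thesis using that \<open>a < Inf Z\<close> z bZ below by (auto simp: Z_def)
qed

lemma foi_nonneg:
  assumes "0 \<le> b1" "0 \<le> b2" "u \<le> 1" "0 \<le> s" "0 \<le> i" "0 \<le> j"
  shows "0 \<le> foi b1 b2 u s i j"
  using assms by (simp add: foi_def)

lemma foi_le:
  assumes "0 \<le> b1" "0 \<le> b2" "0 \<le> u" "u \<le> 1" "0 \<le> s" "0 \<le> i" "0 \<le> j"
  shows "foi b1 b2 u s i j \<le> s * (b1 * i + b2 * j)"
proof -
  have "(1 - u)\<^sup>2 \<le> 1" using assms by (intro power_le_one) auto
  then have "(1 - u)\<^sup>2 * i \<le> i" "(1 - u) * j \<le> j"
    using assms by (auto intro: mult_left_le_one_le)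
  then have "b1 * (1 - u)\<^sup>2 * i + b2 * (1 - u) * j \<le> b1 * i + b2 * j"
    using assms by (simp add: mult.assoc add_mono mult_left_mono)
  then show ?thesis unfolding foi_def using assms by (intro mult_left_mono) auto
qed

lemma foi_le_linear:
  fixes a b :: real
  assumes "0 \<le> b1" "0 \<le> b2" "a \<le> b" "continuous_on {a..b} i" "continuous_on {a..b} j"
    and nonneg: "\<forall>x\<in>{a..b}. 0 \<le> u x \<and> u x \<le> 1 \<and> 0 \<le> s x \<and> 0 \<le> i x \<and> 0 \<le> j x"
  obtains M where "0 \<le> M" "\<forall>x\<in>{a..b}. foi b1 b2 (u x) (s x) (i x) (j x) \<le> M * s x"
proof -
  have "continuous_on {a..b} (\<lambda>x. b1 * i x + b2 * j x)"
    using assms by (intro continuous_on_add continuous_on_mult_left)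
  moreover have "{a..b} \<noteq> {}" using \<open>a \<le> b\<close> by simp
  ultimately obtain c where c: "c \<in> {a..b}"
    and max: "\<forall>x\<in>{a..b}. b1 * i x + b2 * j x \<le> b1 * i c + b2 * j c"
    using continuous_attains_sup[OF compact_Icc] by blast
  have "foi b1 b2 (u x) (s x) (i x) (j x) \<le> (b1 * i c + b2 * j c) * s x" if "x \<in> {a..b}" for x
  proof -
    have "foi b1 b2 (u x) (s x) (i x) (j x) \<le> s x * (b1 * i x + b2 * j x)"
      using assms that by (intro foi_le) auto
    also have "\<dots> \<le> s x * (b1 * i c + b2 * j c)"
      using max nonneg that by (intro mult_left_mono) auto
    finally show ?thesis by (simp add: mult.commute)
  qed
  moreover have "0 \<le> b1 * i c + b2 * j c" using assms c by simp
  ultimately show ?thesis using that by blast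
qed

lemma trajectory_positive:
  assumes rates: "0 \<le> b1" "0 \<le> b2" "0 \<le> g" "0 \<le> r1" "0 \<le> r2" "0 \<le> sg1" "0 \<le> sg2"
    and control: "\<forall>t\<in>{0..T}. 0 \<le> u t \<and> u t \<le> 1"
    and init: "0 < s0" "0 < e0" "0 < i0" "0 < j0"
    and traj: "is_trajectory b1 b2 g r1 r2 sg1 sg2 T s0 e0 i0 j0 u s e i j"
    and t: "t \<in> {0..T}"
  shows "0 < s t \<and> 0 < e t \<and> 0 < i t \<and> 0 < j t"
proof (rule ccontr)
  assume not_pos: "\<not> ?thesis"
  define fs where "fs x = foi b1 b2 (u x) (s x) (i x) (j x)" for x
  define m where "m x = min (min (s x) (e x)) (min (i x) (j x))" for x
  have "0 \<le> T" using t by simp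
  have hs: "\<forall>t\<in>{0..T}. ((\<lambda>x. - fs x) has_integral (s t - s0)) {0..t}"
    and he: "\<forall>t\<in>{0..T}. ((\<lambda>x. fs x - g * e x) has_integral (e t - e0)) {0..t}"
    and hi: "\<forall>t\<in>{0..T}. ((\<lambda>x. sg1 * g * e x - r1 * i x) has_integral (i t - i0)) {0..t}"
    and hj: "\<forall>t\<in>{0..T}. ((\<lambda>x. sg2 * g * e x - r2 * j x) has_integral (j t - j0)) {0..t}"
    using traj by (auto simp: is_trajectory_def fs_def)
  note cont = integral_form_continuous_on[OF hs \<open>0 \<le> T\<close>] integral_form_continuous_on[OF he \<open>0 \<le> T\<close>]
    integral_form_continuous_on[OF hi \<open>0 \<le> T\<close>] integral_form_continuous_on[OF hj \<open>0 \<le> T\<close>]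
  have "continuous_on {0..T} m" unfolding m_def by (intro continuous_on_min cont)
  moreover have "0 < m 0"
    using integral_form_initial_value[OF hs] integral_form_initial_value[OF he]
      integral_form_initial_value[OF hi] integral_form_initial_value[OF hj] \<open>0 \<le> T\<close> init
    by (simp add: m_def)
  moreover have "\<exists>t\<in>{0..T}. m t \<le> 0"
    using t not_pos by (intro bexI[of _ t]) (auto simp: m_def)
  ultimately obtain b where b: "0 < b" "b \<le> T" "m b = 0" and before: "\<forall>x\<in>{0..<b}. 0 < m x"
    by (rule first_zero_point)
  have positive: "\<forall>x\<in>{0..<b}. 0 < s x" "\<forall>x\<in>{0..<b}. 0 < e x"
    "\<forall>x\<in>{0..<b}. 0 < i x" "\<forall>x\<in>{0..<b}. 0 < j x"
    using before by (auto simp: m_def)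
  have "0 \<le> m x" if "x \<in> {0..b}" for x
    using before b that by (cases "x = b") (auto simp: less_imp_le)
  then have nonneg: "\<forall>x\<in>{0..b}. 0 \<le> u x \<and> u x \<le> 1 \<and> 0 \<le> s x \<and> 0 \<le> e x \<and> 0 \<le> i x \<and> 0 \<le> j x"
    using control b by (auto simp: m_def)
  have sub: "{0..b} \<subseteq> {0..T}" using b by auto
  obtain M where "0 \<le> M" "\<forall>x\<in>{0..b}. fs x \<le> M * s x"
  proof (rule foi_le_linear[OF rates(1,2) _ continuous_on_subset[OF cont(3) sub]
        continuous_on_subset[OF cont(4) sub]])
    show "0 \<le> b" using b by simp
    show "\<forall>x\<in>{0..b}. 0 \<le> u x \<and> u x \<le> 1 \<and> 0 \<le> s x \<and> 0 \<le> i x \<and> 0 \<le> j x"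
      using nonneg by simp
  qed (auto simp: fs_def intro!: that)
  then have "s b \<noteq> 0"
    using integral_form_positive_before_imp_nonzero[OF hs b(1,2)] positive(1) by simp
  moreover have "e b \<noteq> 0"
  proof -
    have "\<forall>x\<in>{0..b}. 0 \<le> fs x"
      using rates bspec[OF nonneg] unfolding fs_def by (simp add: foi_nonneg)
    then show ?thesis
      using integral_form_positive_before_imp_nonzero[OF he b(1,2) rates(3)] positive(2) by simp
  qed
  moreover have "i b \<noteq> 0" "j b \<noteq> 0"
  proof -
    have "\<forall>x\<in>{0..b}. 0 \<le> sg1 * g * e x \<and> 0 \<le> sg2 * g * e x"
      using rates bspec[OF nonneg] by simp
    then show "i b \<noteq> 0" "j b \<noteq> 0"
      using integral_form_positive_before_imp_nonzero[OF hi b(1,2) rates(4)]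
        integral_form_positive_before_imp_nonzero[OF hj b(1,2) rates(5)] positive(3,4) by simp_all
  qed
  ultimately show False using \<open>m b = 0\<close> by (auto simp: m_def min_def split: if_splits)
qed

lemma lambda_fun_gt_half_umax:
  assumes "0 \<le> b1" "0 \<le> b2" "0 \<le> a3" "umax \<le> 1" "0 \<le> i" "0 \<le> j"
    and A_neg: "A_fun b1 a3 s i p1 p2 < 0"
  shows "lambda_fun b1 b2 a3 s i j p1 p2 > 0.5 * umax"
proof -
  define D where "D = p1 - p2"
  define A where "A = A_fun b1 a3 s i p1 p2"
  have A: "A = b1 * i * (s * D) + a3 / 2" by (simp add: A_def A_fun_def D_def)
  have B: "B_fun b1 b2 s i j p1 p2 = 2 * A - a3 + b2 * j * (s * D)"
    by (simp add: A B_fun_def D_def algebra_simps)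
  have "b1 * i * (s * D) < 0" using A A_neg \<open>0 \<le> a3\<close> unfolding A_def by linarith
  then have "s * D < 0" using assms by (metis mult_nonneg_nonneg not_le)
  then have "b2 * j * (s * D) \<le> 0" using assms by (simp add: mult_nonneg_nonpos)
  moreover have "A \<le> umax * A"
    using \<open>umax \<le> 1\<close> A_neg mult_right_mono_neg[of umax 1 A] unfolding A_def by simp
  ultimately have "B_fun b1 b2 s i j p1 p2 < umax * A"
    using B A_neg \<open>0 \<le> a3\<close> unfolding A_def by linarith
  then show ?thesis using A_neg unfolding lambda_fun_def A_def by (simp add: field_simps)
qed

theorem lemma4:
  fixes b1 b2 g r1 r2 sg1 sg2 umax a1 a2 a3 T s0 e0 i0 j0 t0 :: real
    and u s e i j p1 p2 p3 p4 :: "real \<Rightarrow> real"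
  assumes params: "b1 > 0" "b2 > 0" "g > 0" "r1 > 0" "r2 > 0"
    and sig: "sg1 > 0" "sg2 > 0" "sg1 + sg2 = 1"
    and umax: "0 \<le> umax" "umax < 1"
    and weights: "a1 \<ge> 0" "a2 \<ge> 0" "a3 > 0"
    and horizon: "T > 0"
    and init: "s0 > 0" "e0 > 0" "i0 > 0" "j0 > 0" "s0 + e0 + i0 + j0 \<le> 1"
    and adm: "admissible umax T u"
    and traj: "is_trajectory b1 b2 g r1 r2 sg1 sg2 T s0 e0 i0 j0 u s e i j"
    and optimal: "\<And>v s' e' i' j'. admissible umax T v \<Longrightarrow>
        is_trajectory b1 b2 g r1 r2 sg1 sg2 T s0 e0 i0 j0 v s' e' i' j' \<Longrightarrow>
        cost a1 a2 a3 T u e i j \<le> cost a1 a2 a3 T v e' i' j'"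
    and adj: "is_adjoint b1 b2 g r1 r2 sg1 sg2 a1 a2 T u s i j p1 p2 p3 p4"
    and nontriv: "\<exists>t\<in>{0..T}. p1 t \<noteq> 0 \<or> p2 t \<noteq> 0 \<or> p3 t \<noteq> 0 \<or> p4 t \<noteq> 0"
    and maxcond: "AE t in lebesgue. t \<in> {0..T} \<longrightarrow>
        (\<forall>v\<in>{0..umax}.
           hamiltonian b1 b2 g r1 r2 sg1 sg2 a2 a3 (s t) (e t) (i t) (j t) (p1 t) (p2 t) (p3 t) (p4 t) v
           \<le> hamiltonian b1 b2 g r1 r2 sg1 sg2 a2 a3 (s t) (e t) (i t) (j t) (p1 t) (p2 t) (p3 t) (p4 t) (u t))"
    and t0: "t0 \<in> {0..<T}"
    and Aneg: "A_fun b1 a3 (s t0) (i t0) (p1 t0) (p2 t0) < 0"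
  shows "lambda_fun b1 b2 a3 (s t0) (i t0) (j t0) (p1 t0) (p2 t0) > 0.5 * umax"
proof -
  have "\<forall>t\<in>{0..T}. 0 \<le> u t \<and> u t \<le> 1"
    using adm umax by (auto simp: admissible_def)
  then have "0 < i t0 \<and> 0 < j t0"
    using trajectory_positive[OF _ _ _ _ _ _ _ _ init(1-4) traj] params sig t0 by fastforce
  then show ?thesis
    using params weights umax by (intro lambda_fun_gt_half_umax[OF _ _ _ _ _ _ Aneg]) auto
qed

end
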